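(* Let $X,Y$ be arbitrary Archimedean vector lattices and let $T:X\to Y$ be a d-isomorphism. Then $T^{-1}$ satisfies condition $(\beta)$.
   Context: All vector lattices are Archimedean. For a subset $A$ of a vector lattice $X$, $A^d=\{x\in X: |x|\wedge|a|=0 \text{ for all } a\in A\}$ and $A^{dd}=(A^d)^d$. For $a,b\in X$ we write $a\lhd b$ if $\{a\}^{dd}\subseteq\{b\}^{dd}$. A linear operator $S$ satisfies condition $(\beta)$ if $Sa\lhd Sb$ whenever $a\lhd b$. A linear operator is disjointness preserving if it maps disjoint elements to disjoint elements. A linear bijection $T:X\to Y$ is a d-isomorphism if both $T$ and $T^{-1}$ are disjointness preserving. *)

theory Defs
  imports "HOL-Analysis.Analysis"
begin

definition vabs :: "'a::{ordered_real_vector,lattice} \<Rightarrow> 'a" where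
  "vabs x = sup x (- x)"

definition archimedean_vl :: "'a::{ordered_real_vector,lattice} itself \<Rightarrow> bool" where
  "archimedean_vl _ \<longleftrightarrow>
     (\<forall>x y::'a. 0 \<le> x \<longrightarrow> (\<forall>n::nat. real n *\<^sub>R x \<le> y) \<longrightarrow> x = 0)"

definition disjoint_compl :: "'a::{ordered_real_vector,lattice} set \<Rightarrow> 'a set" where
  "disjoint_compl A = {x. \<forall>a\<in>A. inf (vabs x) (vabs a) = 0}"

definition band_below :: "'a::{ordered_real_vector,lattice} \<Rightarrow> 'a \<Rightarrow> bool" where
  "band_below a b \<longleftrightarrow> disjoint_compl (disjoint_compl {a}) \<subseteq> disjoint_compl (disjoint_compl {b})"

definition cond_beta ::
  "('a::{ordered_real_vector,lattice} \<Rightarrow> 'b::{ordered_real_vector,lattice}) \<Rightarrow> bool" where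
  "cond_beta S \<longleftrightarrow> (\<forall>a b. band_below a b \<longrightarrow> band_below (S a) (S b))"

definition disj_preserving ::
  "('a::{ordered_real_vector,lattice} \<Rightarrow> 'b::{ordered_real_vector,lattice}) \<Rightarrow> bool" where
  "disj_preserving S \<longleftrightarrow>
     (\<forall>x y. inf (vabs x) (vabs y) = 0 \<longrightarrow> inf (vabs (S x)) (vabs (S y)) = 0)"

definition d_isomorphism ::
  "('a::{ordered_real_vector,lattice} \<Rightarrow> 'b::{ordered_real_vector,lattice}) \<Rightarrow> bool" where
  "d_isomorphism T \<longleftrightarrow> linear T \<and> bij T \<and> disj_preserving T \<and> disj_preserving (inv T)"

end

theory Submission
  imports Defs
begin

text \<open>Since \<open>A\<^sup>d\<^sup>d\<^sup>d = A\<^sup>d\<close>, the relation \<open>a \<lhd> b\<close> just says \<open>{b}\<^sup>d \<subseteq> {a}\<^sup>d\<close>. An operator that is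
  onto and both preserves and reflects disjointness therefore satisfies \<open>(\<beta>)\<close>: every element
  disjoint from \<open>S b\<close> is some \<open>S u\<close> with \<open>u \<perp> b\<close>, hence \<open>u \<perp> a\<close> and \<open>S u \<perp> S a\<close>. For the
  inverse of a d-isomorphism \<open>T\<close>, reflection of disjointness is preservation by \<open>T\<close>.\<close>

lemma disjoint_compl_antimono: "A \<subseteq> B \<Longrightarrow> disjoint_compl B \<subseteq> disjoint_compl A"
  unfolding disjoint_compl_def by blast

lemma subset_disjoint_compl_disjoint_compl: "A \<subseteq> disjoint_compl (disjoint_compl A)"
  unfolding disjoint_compl_def by (auto simp: inf_commute)

lemma disjoint_compl_disjoint_compl_disjoint_compl:
  "disjoint_compl (disjoint_compl (disjoint_compl A)) = disjoint_compl A"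
  by (meson disjoint_compl_antimono subset_disjoint_compl_disjoint_compl subset_antisym)

lemma band_below_iff_disjoint_compl_subset:
  "band_below a b \<longleftrightarrow> disjoint_compl {b} \<subseteq> disjoint_compl {a}"
proof
  assume "band_below a b"
  then have "disjoint_compl (disjoint_compl (disjoint_compl {b}))
      \<subseteq> disjoint_compl (disjoint_compl (disjoint_compl {a}))"
    unfolding band_below_def by (rule disjoint_compl_antimono)
  then show "disjoint_compl {b} \<subseteq> disjoint_compl {a}"
    by (simp add: disjoint_compl_disjoint_compl_disjoint_compl)
next
  assume "disjoint_compl {b} \<subseteq> disjoint_compl {a}"
  then show "band_below a b"
    unfolding band_below_def by (rule disjoint_compl_antimono)
qed

lemma cond_beta_if_surj_preserves_reflects_disjointness:
  fixes S :: "'a::{ordered_real_vector,lattice} \<Rightarrow> 'b::{ordered_real_vector,lattice}"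
  assumes "surj S" and "disj_preserving S"
    and reflects: "\<And>u v. inf (vabs (S u)) (vabs (S v)) = 0 \<Longrightarrow> inf (vabs u) (vabs v) = 0"
  shows "cond_beta S"
  unfolding cond_beta_def band_below_iff_disjoint_compl_subset
proof (intro allI impI subsetI)
  fix a b x
  assume ab: "disjoint_compl {b} \<subseteq> disjoint_compl {a}" and "x \<in> disjoint_compl {S b}"
  obtain u where x: "x = S u" using \<open>surj S\<close> by blast
  have "inf (vabs (S u)) (vabs (S b)) = 0"
    using \<open>x \<in> disjoint_compl {S b}\<close> by (simp add: x disjoint_compl_def)
  then have "u \<in> disjoint_compl {b}" by (simp add: reflects disjoint_compl_def)
  then have "inf (vabs u) (vabs a) = 0" using ab by (auto simp: disjoint_compl_def)
  then show "x \<in> disjoint_compl {S a}"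
    using \<open>disj_preserving S\<close> by (simp add: x disj_preserving_def disjoint_compl_def)
qed

lemma inv_reflects_disjointness:
  assumes "surj T" and "disj_preserving T"
    and "inf (vabs (inv T u)) (vabs (inv T v)) = 0"
  shows "inf (vabs u) (vabs v) = 0"
  using assms by (metis disj_preserving_def surj_f_inv_f)

theorem proposition3p3:
  fixes T :: "'a::{ordered_real_vector,lattice} \<Rightarrow> 'b::{ordered_real_vector,lattice}"
  assumes "archimedean_vl TYPE('a)" and "archimedean_vl TYPE('b)"
    and "d_isomorphism T"
  shows "cond_beta (inv T)"
proof (rule cond_beta_if_surj_preserves_reflects_disjointness)
  have "bij T" and T_disj: "disj_preserving T" and "disj_preserving (inv T)"
    using assms(3) by (auto simp: d_isomorphism_def)
  then show "surj (inv T)" and "disj_preserving (inv T)"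
    by (simp_all add: bij_imp_bij_inv bij_is_surj)
  show "inf (vabs u) (vabs v) = 0" if "inf (vabs (inv T u)) (vabs (inv T v)) = 0" for u v
    using inv_reflects_disjointness[OF bij_is_surj[OF \<open>bij T\<close>] T_disj that] .
qed

end
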